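(* Let $G=(V,E,w)$ be a weighted digraph whose underlying graph has maximum degree $\hat{\Delta}$, and let $w_{\max}>0$ be the maximum edge weight. Let $m=\left\lfloor\frac{1-\epsilon}{w_{\max}}\right\rfloor$, i.e. $m$ is the largest integer with $m\,w_{\max}<1$. Then \[\chi_w(G)\le\left\lceil\frac{\hat{\Delta}}{m+1}\right\rceil+1.\]
   Context: A weighted digraph is $G=(V,E,w)$ with $w:E\to[0,1]$; its underlying graph is obtained by ignoring weights and directions. A $k$-coloring is a map $c:V\to\{1,\dots,k\}$, and $c[v]$ denotes the set of vertices with color $c(v)$. For $S\subseteq V$, $d^-_S(v)=\sum_{u\in S,(u,v)\in E}w(u,v)$. A weighted improper $k$-coloring is a $k$-coloring with $d^-_{c[v]}(v)<1$ for every $v$; $\chi_w(G)$ is the minimum $k$ for which one exists. In the paper's notation $\epsilon$ is an arbitrarily small positive quantity, so that $\lfloor(1-\epsilon)/w\rfloor$ is the largest integer $m$ with $mw<1$. *)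

theory Defs
  imports Complex_Main
begin

definition weighted_digraph :: "'a set \<Rightarrow> ('a \<times> 'a) set \<Rightarrow> ('a \<times> 'a \<Rightarrow> real) \<Rightarrow> bool" where
  "weighted_digraph V E w \<longleftrightarrow> finite V \<and> E \<subseteq> V \<times> V \<and> (\<forall>v. (v, v) \<notin> E)
     \<and> (\<forall>e\<in>E. 0 \<le> w e \<and> w e \<le> 1)"

definition und_nbrs :: "('a \<times> 'a) set \<Rightarrow> 'a \<Rightarrow> 'a set" where
  "und_nbrs E v = {u. u \<noteq> v \<and> ((u, v) \<in> E \<or> (v, u) \<in> E)}"

definition und_max_degree :: "'a set \<Rightarrow> ('a \<times> 'a) set \<Rightarrow> nat" where
  "und_max_degree V E = Max ((\<lambda>v. card (und_nbrs E v)) ` V)"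

definition in_wdeg :: "('a \<times> 'a) set \<Rightarrow> ('a \<times> 'a \<Rightarrow> real) \<Rightarrow> 'a set \<Rightarrow> 'a \<Rightarrow> real" where
  "in_wdeg E w S v = (\<Sum>u\<in>{u\<in>S. (u, v) \<in> E}. w (u, v))"

definition color_class :: "'a set \<Rightarrow> ('a \<Rightarrow> nat) \<Rightarrow> 'a \<Rightarrow> 'a set" where
  "color_class V c v = {u\<in>V. c u = c v}"

definition weighted_improper_coloring ::
  "'a set \<Rightarrow> ('a \<times> 'a) set \<Rightarrow> ('a \<times> 'a \<Rightarrow> real) \<Rightarrow> nat \<Rightarrow> ('a \<Rightarrow> nat) \<Rightarrow> bool" where
  "weighted_improper_coloring V E w k c \<longleftrightarrow>
     (\<forall>v\<in>V. c v \<in> {1..k}) \<and> (\<forall>v\<in>V. in_wdeg E w (color_class V c v) v < 1)"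

definition chi_w :: "'a set \<Rightarrow> ('a \<times> 'a) set \<Rightarrow> ('a \<times> 'a \<Rightarrow> real) \<Rightarrow> nat" where
  "chi_w V E w = (LEAST k. \<exists>c. weighted_improper_coloring V E w k c)"

end

theory Submission
  imports Defs
begin

text \<open>Among all colourings of V with K colours, take one minimising the number of
monochromatic edges of the underlying graph. Recolouring a single vertex v cannot decrease
that number, so v has at most as many neighbours of its own colour as of any other colour;
by pigeonhole at most deg(v)/K of them share its colour (Lovasz's lemma). For
K = \<lceil>\<Delta>/(m+1)\<rceil> + 1 this is at most m, and m in-neighbours of weight at most
w_max contribute at most m w_max < 1 to the weighted in-degree.\<close>

definition same_colour_nbrs :: "('a \<times> 'a) set \<Rightarrow> ('a \<Rightarrow> nat) \<Rightarrow> 'a \<Rightarrow> 'a set" where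
  "same_colour_nbrs E c v = {u \<in> und_nbrs E v. c u = c v}"

definition monochromatic_pairs :: "('a \<times> 'a) set \<Rightarrow> ('a \<Rightarrow> nat) \<Rightarrow> ('a \<times> 'a) set" where
  "monochromatic_pairs E c = {(u, x). u \<in> und_nbrs E x \<and> c u = c x}"

lemma und_nbrs_sym: "u \<in> und_nbrs E x \<longleftrightarrow> x \<in> und_nbrs E u"
  unfolding und_nbrs_def by auto

lemma not_in_und_nbrs_self: "v \<notin> und_nbrs E v"
  unfolding und_nbrs_def by auto

lemma finite_und_nbrs: "finite E \<Longrightarrow> finite (und_nbrs E v)"
proof -
  assume "finite E"
  then have "finite (fst ` E \<union> snd ` E)" by simp
  moreover have "und_nbrs E v \<subseteq> fst ` E \<union> snd ` E"
    unfolding und_nbrs_def by force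
  ultimately show ?thesis by (rule finite_subset[rotated])
qed

lemma finite_monochromatic_pairs: "finite E \<Longrightarrow> finite (monochromatic_pairs E c)"
proof -
  assume "finite E"
  then have "finite (E \<union> prod.swap ` E)" by simp
  moreover have "monochromatic_pairs E c \<subseteq> E \<union> prod.swap ` E"
    unfolding monochromatic_pairs_def und_nbrs_def by force
  ultimately show ?thesis by (rule finite_subset[rotated])
qed

lemma same_colour_nbrs_fun_upd:
  "same_colour_nbrs E (c(v := j)) v = {u \<in> und_nbrs E v. c u = j}"
  unfolding same_colour_nbrs_def using not_in_und_nbrs_self[of v E] by auto

text \<open>Each neighbour u of v with c u = c v is counted twice, as (u, v) and (v, u).\<close>

lemma card_monochromatic_pairs_split:
  assumes "finite E"
  shows "card (monochromatic_pairs E c)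
           = card {p \<in> monochromatic_pairs E c. fst p \<noteq> v \<and> snd p \<noteq> v}
             + 2 * card (same_colour_nbrs E c v)"
proof -
  let ?P = "monochromatic_pairs E c" and ?N = "same_colour_nbrs E c v"
  let ?Q = "{p \<in> ?P. fst p \<noteq> v \<and> snd p \<noteq> v}"
  define into where "into = (\<lambda>u. (u, v)) ` ?N"
  define out where "out = (\<lambda>x. (v, x)) ` ?N"
  have fin_N: "finite ?N"
    unfolding same_colour_nbrs_def using finite_und_nbrs[OF assms] by simp
  have fin_Q: "finite ?Q" using finite_monochromatic_pairs[OF assms] by simp
  have fin_into: "finite into" and fin_out: "finite out"
    unfolding into_def out_def using fin_N by auto
  have "?P = ?Q \<union> (into \<union> out)"
    unfolding monochromatic_pairs_def same_colour_nbrs_def into_def out_def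
    by (auto simp: und_nbrs_sym[of v] not_in_und_nbrs_self intro: und_nbrs_sym[THEN iffD1])
  then have "card ?P = card (?Q \<union> (into \<union> out))" by (rule arg_cong)
  also have "\<dots> = card ?Q + card into + card out"
  proof -
    have "?Q \<inter> (into \<union> out) = {}" "into \<inter> out = {}"
      unfolding into_def out_def same_colour_nbrs_def using not_in_und_nbrs_self[of v E] by auto
    then show ?thesis
      using fin_Q fin_into fin_out by (simp only: card_Un_disjoint finite_Un add.assoc)
  qed
  moreover have "card into = card ?N" "card out = card ?N"
    unfolding into_def out_def by (auto intro: card_image simp: inj_on_def)
  ultimately show ?thesis by simp
qed

lemma same_colour_nbrs_le_if_min_monochromatic:
  assumes "finite E" and "v \<in> V" and "j \<in> {1..K}"
    and c: "\<forall>x\<in>V. c x \<in> {1..K}"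
    and min: "\<And>c'. \<forall>x\<in>V. c' x \<in> {1..K} \<Longrightarrow>
                card (monochromatic_pairs E c) \<le> card (monochromatic_pairs E c')"
  shows "card (same_colour_nbrs E c v) \<le> card {u \<in> und_nbrs E v. c u = j}"
proof -
  let ?c' = "c(v := j)"
  have "card (monochromatic_pairs E c) \<le> card (monochromatic_pairs E ?c')"
    using c assms(3) by (intro min) auto
  moreover have "{p \<in> monochromatic_pairs E ?c'. fst p \<noteq> v \<and> snd p \<noteq> v}
      = {p \<in> monochromatic_pairs E c. fst p \<noteq> v \<and> snd p \<noteq> v}"
    unfolding monochromatic_pairs_def by auto
  ultimately show ?thesis
    using card_monochromatic_pairs_split[OF assms(1), of c v]
      card_monochromatic_pairs_split[OF assms(1), of ?c' v]
    by (simp add: same_colour_nbrs_fun_upd)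
qed

lemma exists_colouring_few_same_colour_nbrs:
  assumes "finite V" and "E \<subseteq> V \<times> V" and "K \<ge> 1"
  obtains c where "\<forall>v\<in>V. c v \<in> {1..K}"
    and "\<forall>v\<in>V. K * card (same_colour_nbrs E c v) \<le> card (und_nbrs E v)"
proof -
  have fin_E: "finite E"
    using assms by (meson finite_SigmaI finite_subset)
  let ?Col = "{c :: 'a \<Rightarrow> nat. \<forall>v\<in>V. c v \<in> {1..K}}"
  have "(\<lambda>_. 1) \<in> ?Col" using assms(3) by auto
  then obtain c where c: "c \<in> ?Col"
    and min: "\<And>c'. c' \<in> ?Col \<Longrightarrow>
                card (monochromatic_pairs E c) \<le> card (monochromatic_pairs E c')"
    using ex_has_least_nat[of "\<lambda>c. c \<in> ?Col" "\<lambda>_. 1" "\<lambda>c. card (monochromatic_pairs E c)"]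
    by blast
  have "K * card (same_colour_nbrs E c v) \<le> card (und_nbrs E v)" if "v \<in> V" for v
  proof -
    have nbrs_V: "und_nbrs E v \<subseteq> V" using assms(2) unfolding und_nbrs_def by auto
    have "K * card (same_colour_nbrs E c v) = (\<Sum>j\<in>{1..K}. card (same_colour_nbrs E c v))"
      by simp
    also have "\<dots> \<le> (\<Sum>j\<in>{1..K}. card {u \<in> und_nbrs E v. c u = j})"
    proof (rule sum_mono)
      fix j assume "j \<in> {1..K}"
      with fin_E \<open>v \<in> V\<close>
      show "card (same_colour_nbrs E c v) \<le> card {u \<in> und_nbrs E v. c u = j}"
        by (rule same_colour_nbrs_le_if_min_monochromatic) (use c min in auto)
    qed
    also have "\<dots> = card (\<Union>j\<in>{1..K}. {u \<in> und_nbrs E v. c u = j})"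
      using finite_und_nbrs[OF fin_E] by (intro card_UN_disjoint[symmetric]) auto
    also have "(\<Union>j\<in>{1..K}. {u \<in> und_nbrs E v. c u = j}) = und_nbrs E v"
      using nbrs_V c by auto
    finally show ?thesis .
  qed
  then show ?thesis using that c by blast
qed

lemma in_wdeg_color_class_le:
  assumes "finite E" and "\<forall>x. (x, x) \<notin> E" and "\<forall>e\<in>E. w e \<le> b" and "0 \<le> b"
  shows "in_wdeg E w (color_class V c v) v \<le> real (card (same_colour_nbrs E c v)) * b"
proof -
  let ?S = "{u \<in> color_class V c v. (u, v) \<in> E}"
  have S_sub: "?S \<subseteq> same_colour_nbrs E c v"
    unfolding color_class_def same_colour_nbrs_def und_nbrs_def using assms(2) by auto
  have fin_N: "finite (same_colour_nbrs E c v)"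
    unfolding same_colour_nbrs_def using finite_und_nbrs[OF assms(1)] by simp
  have "in_wdeg E w (color_class V c v) v \<le> real (card ?S) * b"
    unfolding in_wdeg_def using assms(3) by (intro sum_bounded_above) auto
  also have "\<dots> \<le> real (card (same_colour_nbrs E c v)) * b"
    using card_mono[OF fin_N S_sub] assms(4) by (intro mult_right_mono) auto
  finally show ?thesis .
qed

lemma less_ceiling_divide_add_one_mult:
  fixes x d :: real
  assumes "0 < d"
  shows "x < (of_int \<lceil>x / d\<rceil> + 1) * d"
proof -
  have "x = x / d * d" using assms by simp
  also have "\<dots> < (of_int \<lceil>x / d\<rceil> + 1) * d"
    using assms by (intro mult_strict_right_mono) linarith+
  finally show ?thesis .
qed

lemma exists_colouring_same_colour_nbrs_le:
  assumes "finite V" and "E \<subseteq> V \<times> V" and "\<forall>v\<in>V. card (und_nbrs E v) \<le> D"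
  obtains c where "\<forall>v\<in>V. c v \<in> {1..nat \<lceil>real D / real (m + 1)\<rceil> + 1}"
    and "\<forall>v\<in>V. card (same_colour_nbrs E c v) \<le> m"
proof -
  define K where "K = nat \<lceil>real D / real (m + 1)\<rceil> + 1"
  have "real K = of_int \<lceil>real D / real (m + 1)\<rceil> + 1"
    unfolding K_def by (simp add: ceiling_le_zero)
  then have "real D < real K * real (m + 1)"
    using less_ceiling_divide_add_one_mult[of "real (m + 1)" "real D"] by simp
  then have D_less: "D < K * (m + 1)"
    by (simp only: of_nat_mult[symmetric] of_nat_less_iff)
  have "K \<ge> 1" unfolding K_def by simp
  then obtain c where c_range: "\<forall>v\<in>V. c v \<in> {1..K}"
    and c_few: "\<forall>v\<in>V. K * card (same_colour_nbrs E c v) \<le> card (und_nbrs E v)"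
    by (rule exists_colouring_few_same_colour_nbrs[OF assms(1,2)])
  have "card (same_colour_nbrs E c v) \<le> m" if "v \<in> V" for v
  proof -
    have "K * card (same_colour_nbrs E c v) < K * (m + 1)"
      using c_few assms(3) \<open>v \<in> V\<close> D_less by fastforce
    then show ?thesis by (simp only: mult_less_cancel1) linarith
  qed
  then show ?thesis using that c_range unfolding K_def by blast
qed

lemma weighted_improper_coloring_if_same_colour_nbrs_le:
  assumes "weighted_digraph V E w" and "\<forall>e\<in>E. w e \<le> b" and "0 \<le> b" and "real m * b < 1"
    and "\<forall>v\<in>V. c v \<in> {1..K}" and "\<forall>v\<in>V. card (same_colour_nbrs E c v) \<le> m"
  shows "weighted_improper_coloring V E w K c"
proof -
  have fin_E: "finite E" and no_loops: "\<forall>x. (x, x) \<notin> E"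
    using assms(1) unfolding weighted_digraph_def by (auto intro: finite_subset)
  have "in_wdeg E w (color_class V c v) v < 1" if "v \<in> V" for v
  proof -
    have "in_wdeg E w (color_class V c v) v \<le> real (card (same_colour_nbrs E c v)) * b"
      using in_wdeg_color_class_le[OF fin_E no_loops assms(2,3)] .
    also have "\<dots> \<le> real m * b"
      using assms(3,6) \<open>v \<in> V\<close> by (intro mult_right_mono) auto
    finally show ?thesis using assms(4) by simp
  qed
  then show ?thesis
    using assms(5) unfolding weighted_improper_coloring_def by blast
qed

theorem theorem3p3:
  fixes V :: "'a set" and E :: "('a \<times> 'a) set" and w :: "'a \<times> 'a \<Rightarrow> real"
    and wmax :: real and m :: nat
  assumes "weighted_digraph V E w"
    and "E \<noteq> {}"
    and "wmax = Max (w ` E)"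
    and "wmax > 0"
    and "real m * wmax < 1"
    and "\<forall>n::nat. real n * wmax < 1 \<longrightarrow> n \<le> m"
  shows "real (chi_w V E w)
           \<le> real_of_int \<lceil>real (und_max_degree V E) / real (m + 1)\<rceil> + 1"
proof -
  define D where "D = und_max_degree V E"
  have fin_V: "finite V" and E_V: "E \<subseteq> V \<times> V"
    using assms(1) unfolding weighted_digraph_def by auto
  have fin_E: "finite E" using fin_V E_V by (meson finite_SigmaI finite_subset)
  have "\<forall>v\<in>V. card (und_nbrs E v) \<le> D"
    unfolding D_def und_max_degree_def using fin_V by auto
  then obtain c where "\<forall>v\<in>V. c v \<in> {1..nat \<lceil>real D / real (m + 1)\<rceil> + 1}"
    and "\<forall>v\<in>V. card (same_colour_nbrs E c v) \<le> m"
    by (rule exists_colouring_same_colour_nbrs_le[OF fin_V E_V])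
  moreover have "\<forall>e\<in>E. w e \<le> wmax" using assms(3) fin_E by auto
  ultimately have "weighted_improper_coloring V E w (nat \<lceil>real D / real (m + 1)\<rceil> + 1) c"
    using assms(1,4,5) by (intro weighted_improper_coloring_if_same_colour_nbrs_le) auto
  then have "chi_w V E w \<le> nat \<lceil>real D / real (m + 1)\<rceil> + 1"
    unfolding chi_w_def by (auto intro: Least_le)
  moreover have "real (nat \<lceil>real D / real (m + 1)\<rceil> + 1) = of_int \<lceil>real D / real (m + 1)\<rceil> + 1"
    by (simp add: ceiling_le_zero)
  ultimately show ?thesis unfolding D_def by linarith
qed

end
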